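(* Let $k$ be a commutative ring and $H$ a Hopf algebra over $k$ that is finitely generated projective as a $k$-module. If $H$ is a separable $k$-algebra, then $H$ is an FH-algebra.
   Context: $H$ is an FH-algebra if it is a Frobenius $k$-algebra admitting a Frobenius homomorphism $H\to k$ that is a left integral in $H^*$, i.e. lies in $\int^\ell_{H^*}=\{f\in H^*: gf=g(1_H)f\ \forall g\in H^*\}$ (product in $H^*$ is convolution). *)

theory Defs
  imports Main HOL.Modules "HOL-Library.Function_Algebras"
begin

text \<open>Throughout: k is a commutative ring (type 'k :: comm_ring_1), and H is a
 k-module given by an abelian group type 'h with scalar multiplication
 smult :: 'k => 'h => 'h (assumed to satisfy the library locale module).\<close>

definition lin_fun :: "('k::comm_ring_1 \<Rightarrow> 'h::ab_group_add \<Rightarrow> 'h) \<Rightarrow> ('h \<Rightarrow> 'k) \<Rightarrow> bool" where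
  "lin_fun smult f \<longleftrightarrow> (\<forall>x y. f (x + y) = f x + f y) \<and> (\<forall>c x. f (smult c x) = c * f x)"

definition lin_map :: "('k::comm_ring_1 \<Rightarrow> 'h::ab_group_add \<Rightarrow> 'h) \<Rightarrow> ('h \<Rightarrow> 'h) \<Rightarrow> bool" where
  "lin_map smult f \<longleftrightarrow> (\<forall>x y. f (x + y) = f x + f y) \<and> (\<forall>c x. f (smult c x) = smult c (f x))"

text \<open>Finitely generated projective: H is a direct summand (retract) of a finitely
 generated free module k^n (modelled as functions nat => k vanishing from n on).\<close>
definition fg_projective :: "('k::comm_ring_1 \<Rightarrow> 'h::ab_group_add \<Rightarrow> 'h) \<Rightarrow> bool" where
  "fg_projective smult \<longleftrightarrow>
    (\<exists>(n::nat) (i :: 'h \<Rightarrow> nat \<Rightarrow> 'k) (p :: (nat \<Rightarrow> 'k) \<Rightarrow> 'h).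
       (\<forall>x y. i (x + y) = i x + i y) \<and> (\<forall>c x. i (smult c x) = (\<lambda>j. c * i x j)) \<and>
       (\<forall>x j. n \<le> j \<longrightarrow> i x j = 0) \<and>
       (\<forall>u v. p (u + v) = p u + p v) \<and> (\<forall>c u. p (\<lambda>j. c * u j) = smult c (p u)) \<and>
       (\<forall>x. p (i x) = x))"

text \<open>An element of H\<otimes>...\<otimes>H (n factors) is represented by a finite formal sum of
 simple tensors, i.e. a list of lists of length n.  Two representatives are equal in the
 tensor product iff the difference of the corresponding elements of the free k-module on
 'h list lies in the k-submodule spanned by the multilinearity relations.\<close>

definition tdelta :: "'h list \<Rightarrow> 'h list \<Rightarrow> 'k::comm_ring_1" where
  "tdelta t = (\<lambda>q. if q = t then 1 else 0)"

definition fscale :: "'k::comm_ring_1 \<Rightarrow> ('h list \<Rightarrow> 'k) \<Rightarrow> ('h list \<Rightarrow> 'k)" where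
  "fscale c f = (\<lambda>q. c * f q)"

definition frep :: "'h list list \<Rightarrow> 'h list \<Rightarrow> 'k::comm_ring_1" where
  "frep xs = (\<lambda>q. of_nat (count_list xs q))"

definition tens_rel :: "('k::comm_ring_1 \<Rightarrow> 'h::ab_group_add \<Rightarrow> 'h) \<Rightarrow> nat \<Rightarrow> ('h list \<Rightarrow> 'k) set" where
  "tens_rel smult n =
     {tdelta (l @ [a + a'] @ r) - tdelta (l @ [a] @ r) - tdelta (l @ [a'] @ r) | l r a a'.
        length l + length r + 1 = n}
   \<union> {tdelta (l @ [smult c a] @ r) - fscale c (tdelta (l @ [a] @ r)) | l r c a.
        length l + length r + 1 = n}"

definition tens_eq :: "('k::comm_ring_1 \<Rightarrow> 'h::ab_group_add \<Rightarrow> 'h) \<Rightarrow> nat \<Rightarrow> 'h list list \<Rightarrow> 'h list list \<Rightarrow> bool" where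
  "tens_eq smult n xs ys \<longleftrightarrow>
     (\<forall>t \<in> set xs \<union> set ys. length t = n) \<and>
     (frep xs - frep ys :: 'h list \<Rightarrow> 'k) \<in> module.span fscale (tens_rel smult n)"

definition k_algebra :: "('k::comm_ring_1 \<Rightarrow> 'h::ab_group_add \<Rightarrow> 'h) \<Rightarrow> ('h \<Rightarrow> 'h \<Rightarrow> 'h) \<Rightarrow> 'h \<Rightarrow> bool" where
  "k_algebra smult mult one \<longleftrightarrow>
     (\<forall>x y z. mult (mult x y) z = mult x (mult y z)) \<and>
     (\<forall>x. mult one x = x \<and> mult x one = x) \<and>
     (\<forall>x y z. mult (x + y) z = mult x z + mult y z) \<and>
     (\<forall>x y z. mult x (y + z) = mult x y + mult x z) \<and>
     (\<forall>c x y. mult (smult c x) y = smult c (mult x y) \<and> mult x (smult c y) = smult c (mult x y))"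

text \<open>Delta h is a representative of the comultiplication of h in H\<otimes>H, eps the counit,
 S the antipode.\<close>
definition hopf_algebra ::
  "('k::comm_ring_1 \<Rightarrow> 'h::ab_group_add \<Rightarrow> 'h) \<Rightarrow> ('h \<Rightarrow> 'h \<Rightarrow> 'h) \<Rightarrow> 'h \<Rightarrow>
   ('h \<Rightarrow> 'h list list) \<Rightarrow> ('h \<Rightarrow> 'k) \<Rightarrow> ('h \<Rightarrow> 'h) \<Rightarrow> bool" where
  "hopf_algebra smult mult one Delta eps S \<longleftrightarrow>
     k_algebra smult mult one \<and>
     \<comment> \<open>Delta : H -> H \<otimes> H is k-linear\<close>
     (\<forall>h. \<forall>t \<in> set (Delta h). length t = 2) \<and>
     (\<forall>x y. tens_eq smult 2 (Delta (x + y)) (Delta x @ Delta y)) \<and>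
     (\<forall>c x. tens_eq smult 2 (Delta (smult c x)) (map (\<lambda>t. [smult c (t!0), t!1]) (Delta x))) \<and>
     \<comment> \<open>coassociativity\<close>
     (\<forall>h. tens_eq smult 3
        (concat (map (\<lambda>t. map (\<lambda>u. [u!0, u!1, t!1]) (Delta (t!0))) (Delta h)))
        (concat (map (\<lambda>t. map (\<lambda>u. [t!0, u!0, u!1]) (Delta (t!1))) (Delta h)))) \<and>
     \<comment> \<open>counit\<close>
     lin_fun smult eps \<and>
     (\<forall>h. sum_list (map (\<lambda>t. smult (eps (t!0)) (t!1)) (Delta h)) = h) \<and>
     (\<forall>h. sum_list (map (\<lambda>t. smult (eps (t!1)) (t!0)) (Delta h)) = h) \<and>
     \<comment> \<open>Delta and eps are algebra maps\<close>
     (\<forall>x y. tens_eq smult 2 (Delta (mult x y))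
        (concat (map (\<lambda>t. map (\<lambda>u. [mult (t!0) (u!0), mult (t!1) (u!1)]) (Delta y)) (Delta x)))) \<and>
     tens_eq smult 2 (Delta one) [[one, one]] \<and>
     (\<forall>x y. eps (mult x y) = eps x * eps y) \<and> eps one = 1 \<and>
     \<comment> \<open>antipode\<close>
     lin_map smult S \<and>
     (\<forall>h. sum_list (map (\<lambda>t. mult (S (t!0)) (t!1)) (Delta h)) = smult (eps h) one) \<and>
     (\<forall>h. sum_list (map (\<lambda>t. mult (t!0) (S (t!1))) (Delta h)) = smult (eps h) one)"

definition separable_algebra :: "('k::comm_ring_1 \<Rightarrow> 'h::ab_group_add \<Rightarrow> 'h) \<Rightarrow> ('h \<Rightarrow> 'h \<Rightarrow> 'h) \<Rightarrow> 'h \<Rightarrow> bool" where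
  "separable_algebra smult mult one \<longleftrightarrow>
     (\<exists>e. (\<forall>t \<in> set e. length t = 2) \<and>
          sum_list (map (\<lambda>t. mult (t!0) (t!1)) e) = one \<and>
          (\<forall>a. tens_eq smult 2 (map (\<lambda>t. [mult a (t!0), t!1]) e)
                               (map (\<lambda>t. [t!0, mult (t!1) a]) e)))"

text \<open>phi is a Frobenius homomorphism: phi is in H* and h |-> (x |-> phi (x h)) is a
 bijection H -> H* (an isomorphism of left H-modules, H* having the action
 (h.f)(x) = f(x h)).\<close>
definition frobenius_hom :: "('k::comm_ring_1 \<Rightarrow> 'h::ab_group_add \<Rightarrow> 'h) \<Rightarrow> ('h \<Rightarrow> 'h \<Rightarrow> 'h) \<Rightarrow> ('h \<Rightarrow> 'k) \<Rightarrow> bool" where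
  "frobenius_hom smult mult phi \<longleftrightarrow>
     lin_fun smult phi \<and>
     bij_betw (\<lambda>h. (\<lambda>x. phi (mult x h))) UNIV {f. lin_fun smult f}"

definition frobenius_algebra :: "('k::comm_ring_1 \<Rightarrow> 'h::ab_group_add \<Rightarrow> 'h) \<Rightarrow> ('h \<Rightarrow> 'h \<Rightarrow> 'h) \<Rightarrow> 'h \<Rightarrow> bool" where
  "frobenius_algebra smult mult one \<longleftrightarrow>
     k_algebra smult mult one \<and> fg_projective smult \<and> (\<exists>phi. frobenius_hom smult mult phi)"

text \<open>Left integrals in H*, convolution (g*f)(x) = sum g(x_(1)) f(x_(2)).\<close>
definition left_integral_dual :: "('k::comm_ring_1 \<Rightarrow> 'h::ab_group_add \<Rightarrow> 'h) \<Rightarrow> 'h \<Rightarrow> ('h \<Rightarrow> 'h list list) \<Rightarrow> ('h \<Rightarrow> 'k) \<Rightarrow> bool" where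
  "left_integral_dual smult one Delta f \<longleftrightarrow>
     lin_fun smult f \<and>
     (\<forall>g. lin_fun smult g \<longrightarrow>
        (\<forall>x. sum_list (map (\<lambda>t. g (t!0) * f (t!1)) (Delta x)) = g one * f x))"

definition FH_algebra :: "('k::comm_ring_1 \<Rightarrow> 'h::ab_group_add \<Rightarrow> 'h) \<Rightarrow> ('h \<Rightarrow> 'h \<Rightarrow> 'h) \<Rightarrow> 'h \<Rightarrow> ('h \<Rightarrow> 'h list list) \<Rightarrow> bool" where
  "FH_algebra smult mult one Delta \<longleftrightarrow>
     frobenius_algebra smult mult one \<and>
     (\<exists>phi. frobenius_hom smult mult phi \<and> left_integral_dual smult one Delta phi)"

end

theory Submission
  imports Defs
begin

text \<open>Separability yields a normalized two-sided integral \<open>t\<close> of \<open>H\<close> (\<open>\<epsilon>(t) = 1\<close>): apply the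
  counit to one tensor factor of a separability idempotent. For a dual basis \<open>(b\<^sub>j, f\<^sub>j)\<close> of the
  finitely generated projective module \<open>H\<close>, the trace form \<open>\<phi>(x) = Tr(y \<mapsto> x S\<^sup>2(y))\<close> is a left
  integral in \<open>H\<^sup>*\<close> (Radford's trace formula), and \<open>\<phi>(t) = \<epsilon>(t) = 1\<close>. The integral property gives
  \<open>h = \<Sum> \<phi>(t\<^sub>2 h) S(t\<^sub>1)\<close>, so \<open>h \<mapsto> \<phi>(- h)\<close> is injective. Since \<open>S\<close> reverses products,
  cyclicity of the trace gives \<open>\<phi>(a b) = \<phi>(b S\<^sup>2(a))\<close>; combined with the same expansion this
  writes every \<open>f \<in> H\<^sup>*\<close> as \<open>\<phi>(- S\<^sup>2(h'))\<close> with \<open>h' = \<Sum> f(S t\<^sub>1) t\<^sub>2\<close>.\<close>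

section \<open>Multilinear functions on tensor representatives\<close>

lemma module_fscale: "module (fscale :: 'k::comm_ring_1 \<Rightarrow> ('h list \<Rightarrow> 'k) \<Rightarrow> _)"
  by unfold_locales (auto simp: fscale_def fun_eq_iff algebra_simps)

lemma module_times: "module ((*) :: 'a::comm_ring_1 \<Rightarrow> 'a \<Rightarrow> 'a)"
  by unfold_locales (auto simp: algebra_simps)

lemma (in module) scale_sum_list:
  "scale c (sum_list (map f xs)) = sum_list (map (\<lambda>t. scale c (f t)) xs)"
  by (induction xs) (simp_all add: scale_right_distrib)

definition lin_ext ::
  "('k::comm_ring_1 \<Rightarrow> 'v::ab_group_add \<Rightarrow> 'v) \<Rightarrow> ('a \<Rightarrow> 'v) \<Rightarrow> ('a \<Rightarrow> 'k) \<Rightarrow> 'v"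
  where
  "lin_ext scl F u = (\<Sum>q\<in>{q. u q \<noteq> 0}. scl (u q) (F q))"

definition finite_support :: "('a \<Rightarrow> 'k::zero) \<Rightarrow> bool" where
  "finite_support u \<longleftrightarrow> finite {q. u q \<noteq> 0}"

lemma finite_support_add:
  "finite_support u \<Longrightarrow> finite_support v \<Longrightarrow> finite_support (u + v :: 'a \<Rightarrow> 'k::comm_ring_1)"
  unfolding finite_support_def by (rule finite_subset[of _ "{q. u q \<noteq> 0} \<union> {q. v q \<noteq> 0}"]) auto

lemma finite_support_diff:
  "finite_support u \<Longrightarrow> finite_support v \<Longrightarrow> finite_support (u - v :: 'a \<Rightarrow> 'k::comm_ring_1)"
  unfolding finite_support_def by (rule finite_subset[of _ "{q. u q \<noteq> 0} \<union> {q. v q \<noteq> 0}"]) auto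

lemma finite_support_fscale: "finite_support u \<Longrightarrow> finite_support (fscale c u)"
  unfolding finite_support_def by (rule finite_subset[of _ "{q. u q \<noteq> 0}"]) (auto simp: fscale_def)

lemma finite_support_tdelta: "finite_support (tdelta q :: _ \<Rightarrow> 'k::comm_ring_1)"
  unfolding finite_support_def by (rule finite_subset[of _ "{q}"]) (auto simp: tdelta_def)

lemma frep_Nil: "(frep [] :: _ \<Rightarrow> 'k::comm_ring_1) = 0"
  by (auto simp: frep_def fun_eq_iff)

lemma frep_Cons: "(frep (x # xs) :: _ \<Rightarrow> 'k::comm_ring_1) = tdelta x + frep xs"
  by (auto simp: frep_def tdelta_def fun_eq_iff)

lemma finite_support_frep: "finite_support (frep xs :: _ \<Rightarrow> 'k::comm_ring_1)"
proof (induction xs)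
  case Nil
  show ?case by (simp add: frep_Nil finite_support_def)
next
  case (Cons x xs)
  then show ?case by (simp only: frep_Cons finite_support_add finite_support_tdelta)
qed

context module
begin

lemma lin_ext_eq:
  assumes "finite A" "{q. u q \<noteq> 0} \<subseteq> A"
  shows "lin_ext scale F u = (\<Sum>q\<in>A. scale (u q) (F q))"
  unfolding lin_ext_def by (rule sum.mono_neutral_left) (use assms in auto)

lemma lin_ext_add:
  assumes "finite_support u" "finite_support v"
  shows "lin_ext scale F (u + v) = lin_ext scale F u + lin_ext scale F v"
proof -
  let ?A = "{q. u q \<noteq> 0} \<union> {q. v q \<noteq> 0}"
  have A: "finite ?A" using assms by (simp add: finite_support_def)
  have "lin_ext scale F (u + v) = (\<Sum>q\<in>?A. scale (u q) (F q)) + (\<Sum>q\<in>?A. scale (v q) (F q))"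
    by (subst lin_ext_eq[OF A]) (auto simp: scale_left_distrib sum.distrib)
  then show ?thesis by (simp add: lin_ext_eq[OF A])
qed

lemma lin_ext_diff:
  assumes "finite_support u" "finite_support v"
  shows "lin_ext scale F (u - v) = lin_ext scale F u - lin_ext scale F v"
proof -
  let ?A = "{q. u q \<noteq> 0} \<union> {q. v q \<noteq> 0}"
  have A: "finite ?A" using assms by (simp add: finite_support_def)
  have "lin_ext scale F (u - v) = (\<Sum>q\<in>?A. scale (u q) (F q)) - (\<Sum>q\<in>?A. scale (v q) (F q))"
    by (subst lin_ext_eq[OF A]) (auto simp: scale_left_diff_distrib sum_subtractf)
  then show ?thesis by (simp add: lin_ext_eq[OF A])
qed

lemma lin_ext_fscale:
  assumes "finite_support u"
  shows "lin_ext scale F (fscale c u) = scale c (lin_ext scale F u)"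
proof -
  have "lin_ext scale F (fscale c u) = (\<Sum>q\<in>{q. u q \<noteq> 0}. scale (fscale c u q) (F q))"
    using assms by (intro lin_ext_eq) (auto simp: fscale_def finite_support_def)
  then show ?thesis by (simp add: lin_ext_def fscale_def scale_sum_right)
qed

lemma lin_ext_tdelta: "lin_ext scale F (tdelta q) = F q"
proof -
  have "lin_ext scale F (tdelta q) = (\<Sum>p\<in>{q}. scale (tdelta q p) (F p))"
    by (rule lin_ext_eq) (auto simp: tdelta_def)
  then show ?thesis by (simp add: tdelta_def)
qed

lemma lin_ext_frep: "lin_ext scale F (frep xs) = sum_list (map F xs)"
proof (induction xs)
  case Nil
  show ?case by (simp add: frep_Nil lin_ext_def)
next
  case (Cons x xs)
  then show ?case
    by (simp only: frep_Cons lin_ext_add finite_support_tdelta finite_support_frep lin_ext_tdelta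
        list.map sum_list.Cons)
qed

text \<open>The linear extension of \<open>F\<close> to the free module vanishes on the multilinearity
  relations, hence on their span.\<close>

lemma tens_eq_sum_list_eq:
  assumes T: "tens_eq smult n xs ys"
    and add: "\<And>l r a a'. length l + length r + 1 = n \<Longrightarrow>
       F (l @ [a + a'] @ r) = F (l @ [a] @ r) + F (l @ [a'] @ r)"
    and hom: "\<And>l r c a. length l + length r + 1 = n \<Longrightarrow>
       F (l @ [smult c a] @ r) = scale c (F (l @ [a] @ r))"
  shows "sum_list (map F xs) = sum_list (map F ys)"
proof -
  let ?P = "\<lambda>u. finite_support u \<and> lin_ext scale F u = 0"
  have rel: "?P u" if "u \<in> tens_rel smult n" for u
    using that unfolding tens_rel_def
  proof (elim UnE CollectE exE conjE)
    fix l r a a'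
    assume u: "u = tdelta (l @ [a + a'] @ r) - tdelta (l @ [a] @ r) - tdelta (l @ [a'] @ r)"
      and len: "length l + length r + 1 = n"
    show ?thesis unfolding u
      by (simp only: finite_support_diff finite_support_tdelta lin_ext_diff lin_ext_tdelta
          add[OF len]) simp
  next
    fix l r c a
    assume u: "u = tdelta (l @ [smult c a] @ r) - fscale c (tdelta (l @ [a] @ r))"
      and len: "length l + length r + 1 = n"
    show ?thesis unfolding u
      by (simp only: finite_support_diff finite_support_fscale finite_support_tdelta lin_ext_diff
          lin_ext_fscale lin_ext_tdelta hom[OF len]) simp
  qed
  have span: "frep xs - frep ys \<in> module.span fscale (tens_rel smult n)"
    using T by (simp add: tens_eq_def)
  have "?P (frep xs - frep ys)"
  proof (rule module.span_induct_alt[OF module_fscale span])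
    show "?P 0" by (simp add: lin_ext_def finite_support_def)
  next
    fix c x y assume "x \<in> tens_rel smult n" and "?P y"
    with rel show "?P (fscale c x + y)"
      by (simp add: finite_support_add finite_support_fscale lin_ext_add lin_ext_fscale)
  qed
  then show ?thesis
    by (simp add: lin_ext_diff finite_support_frep lin_ext_frep)
qed

end

definition k_linear ::
  "('k::comm_ring_1 \<Rightarrow> 'h::ab_group_add \<Rightarrow> 'h) \<Rightarrow> ('k \<Rightarrow> 'v::ab_group_add \<Rightarrow> 'v) \<Rightarrow> ('h \<Rightarrow> 'v) \<Rightarrow> bool"
  where
  "k_linear smult scl f \<longleftrightarrow> (\<forall>x y. f (x + y) = f x + f y) \<and> (\<forall>c x. f (smult c x) = scl c (f x))"

definition k_bilinear ::
  "('k::comm_ring_1 \<Rightarrow> 'h::ab_group_add \<Rightarrow> 'h) \<Rightarrow> ('k \<Rightarrow> 'v::ab_group_add \<Rightarrow> 'v) \<Rightarrow>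
    ('h \<Rightarrow> 'h \<Rightarrow> 'v) \<Rightarrow> bool"
  where
  "k_bilinear smult scl B \<longleftrightarrow> (\<forall>b. k_linear smult scl (\<lambda>a. B a b)) \<and> (\<forall>a. k_linear smult scl (B a))"

definition k_trilinear ::
  "('k::comm_ring_1 \<Rightarrow> 'h::ab_group_add \<Rightarrow> 'h) \<Rightarrow> ('k \<Rightarrow> 'v::ab_group_add \<Rightarrow> 'v) \<Rightarrow>
    ('h \<Rightarrow> 'h \<Rightarrow> 'h \<Rightarrow> 'v) \<Rightarrow> bool"
  where
  "k_trilinear smult scl K \<longleftrightarrow>
     (\<forall>b d. k_linear smult scl (\<lambda>a. K a b d)) \<and> (\<forall>a d. k_linear smult scl (\<lambda>b. K a b d)) \<and>
     (\<forall>a b. k_linear smult scl (K a b))"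

lemma k_linear_zero: "k_linear smult scl f \<Longrightarrow> f 0 = 0"
  unfolding k_linear_def by (metis add_cancel_right_right add_0)

lemma (in module) k_linear_sum_list:
  "k_linear smult scale f \<Longrightarrow> f (sum_list (map g xs)) = sum_list (map (\<lambda>t. f (g t)) xs)"
  by (induction xs) (simp_all add: k_linear_zero, simp add: k_linear_def)

lemma (in module) k_linear_sum:
  "k_linear smult scale f \<Longrightarrow> f (\<Sum>j\<in>A. g j) = (\<Sum>j\<in>A. f (g j))"
  by (induction A rule: infinite_finite_induct)
    (simp_all add: k_linear_zero, simp add: k_linear_def)

lemma length_eq_2_split:
  "length l + length r + 1 = 2 \<Longrightarrow> (l = [] \<and> (\<exists>x. r = [x])) \<or> ((\<exists>y. l = [y]) \<and> r = [])"
  by (cases l; cases r) (auto simp: length_Suc_conv)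

lemma length_eq_3_split: "length l + length r + 1 = 3 \<Longrightarrow>
   (l = [] \<and> (\<exists>x y. r = [x, y])) \<or> ((\<exists>y. l = [y]) \<and> (\<exists>x. r = [x])) \<or> ((\<exists>x y. l = [x, y]) \<and> r = [])"
  by (cases l; cases r) (auto simp: length_Suc_conv numeral_3_eq_3)

context module
begin

lemma tens_eq_bilinear:
  fixes smult :: "'a \<Rightarrow> 'h::ab_group_add \<Rightarrow> 'h"
  assumes B: "k_bilinear smult scale B" and T: "tens_eq smult 2 xs ys"
  shows "sum_list (map (\<lambda>t. B (t!0) (t!1)) xs) = sum_list (map (\<lambda>t. B (t!0) (t!1)) ys)"
proof (rule tens_eq_sum_list_eq[OF T])
  let ?F = "\<lambda>t. B (t!0) (t!1)"
  fix l r :: "'h list"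
  assume "length l + length r + 1 = 2"
  from length_eq_2_split[OF this]
  show "?F (l @ [a + a'] @ r) = ?F (l @ [a] @ r) + ?F (l @ [a'] @ r)"
    and "?F (l @ [smult c a] @ r) = scale c (?F (l @ [a] @ r))" for a a' c
    using B by (auto simp: k_bilinear_def k_linear_def)
qed

lemma tens_eq_trilinear:
  fixes smult :: "'a \<Rightarrow> 'h::ab_group_add \<Rightarrow> 'h"
  assumes K: "k_trilinear smult scale K" and T: "tens_eq smult 3 xs ys"
  shows "sum_list (map (\<lambda>t. K (t!0) (t!1) (t!2)) xs)
    = sum_list (map (\<lambda>t. K (t!0) (t!1) (t!2)) ys)"
proof (rule tens_eq_sum_list_eq[OF T])
  let ?F = "\<lambda>t. K (t!0) (t!1) (t!2)"
  fix l r :: "'h list"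
  assume "length l + length r + 1 = 3"
  from length_eq_3_split[OF this]
  show "?F (l @ [a + a'] @ r) = ?F (l @ [a] @ r) + ?F (l @ [a'] @ r)"
    and "?F (l @ [smult c a] @ r) = scale c (?F (l @ [a] @ r))" for a a' c
    using K by (auto simp: k_trilinear_def k_linear_def)
qed

end

section \<open>Dual bases and traces\<close>

locale dual_basis = module smult
  for smult :: "'k::comm_ring_1 \<Rightarrow> 'h::ab_group_add \<Rightarrow> 'h" +
  fixes n :: nat and basis :: "nat \<Rightarrow> 'h" and coord :: "nat \<Rightarrow> 'h \<Rightarrow> 'k"
  assumes coord_k_linear: "k_linear smult (*) (coord j)"
    and expansion: "x = (\<Sum>j<n. smult (coord j x) (basis j))"
begin

lemma coord_add [simp]: "coord j (x + y) = coord j x + coord j y"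
  and coord_smult [simp]: "coord j (smult c x) = c * coord j x"
  using coord_k_linear by (simp_all add: k_linear_def)

lemma k_linear_expansion:
  assumes M: "module scl" and L: "k_linear smult scl g"
  shows "g x = (\<Sum>j<n. scl (coord j x) (g (basis j)))"
proof -
  have "g x = g (\<Sum>j<n. smult (coord j x) (basis j))"
    by (subst expansion) (rule refl)
  also have "\<dots> = (\<Sum>j<n. scl (coord j x) (g (basis j)))"
    using L by (simp add: module.k_linear_sum[OF M L] k_linear_def)
  finally show ?thesis .
qed

definition trace :: "('h \<Rightarrow> 'h) \<Rightarrow> 'k" where
  "trace F = (\<Sum>j<n. coord j (F (basis j)))"

lemma trace_comp_commute:
  assumes F: "k_linear smult smult F" and G: "k_linear smult smult G"
  shows "trace (\<lambda>x. F (G x)) = trace (\<lambda>x. G (F x))"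
proof -
  have expand: "coord j (A (B (basis k))) = (\<Sum>i<n. coord i (B (basis k)) * coord j (A (basis i)))"
    if "k_linear smult smult A" for A B j k
    using that by (intro k_linear_expansion[OF module_times]) (simp add: k_linear_def)
  have "trace (\<lambda>x. F (G x)) = (\<Sum>j<n. \<Sum>i<n. coord i (G (basis j)) * coord j (F (basis i)))"
    unfolding trace_def using expand[OF F] by simp
  also have "\<dots> = (\<Sum>i<n. \<Sum>j<n. coord j (F (basis i)) * coord i (G (basis j)))"
    by (subst sum.swap) (simp add: mult.commute)
  also have "\<dots> = trace (\<lambda>x. G (F x))"
    unfolding trace_def using expand[OF G] by simp
  finally show ?thesis .
qed

end

lemma sum_fun_apply: "(\<Sum>j\<in>A. f j) x = (\<Sum>j\<in>A. f j x)"
  by (induction A rule: infinite_finite_induct) auto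

lemma fg_projective_dual_basis:
  fixes smult :: "'k::comm_ring_1 \<Rightarrow> 'h::ab_group_add \<Rightarrow> 'h"
  assumes M: "module smult" and P: "fg_projective smult"
  obtains n basis coord where "dual_basis smult n basis coord"
proof -
  obtain n and i :: "'h \<Rightarrow> nat \<Rightarrow> 'k" and p where
    i_add: "\<And>x y. i (x + y) = i x + i y" and i_smult: "\<And>c x. i (smult c x) = (\<lambda>j. c * i x j)"
    and i_support: "\<And>x j. n \<le> j \<Longrightarrow> i x j = 0"
    and p_add: "\<And>u v. p (u + v) = p u + p v" and p_smult: "\<And>c u. p (\<lambda>j. c * u j) = smult c (p u)"
    and p_i: "\<And>x. p (i x) = x"
    using P unfolding fg_projective_def by blast
  define basis where "basis j = p (\<lambda>m. if m = j then 1 else 0)" for j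
  define coord where "coord j x = i x j" for j x
  have p_zero: "p (\<lambda>_. 0) = 0"
    using p_smult[of 0 "\<lambda>_. 0"] module.scale_zero_left[OF M] by simp
  have p_sum: "p (\<Sum>j<(N::nat). (\<lambda>m. c j * d j m)) = (\<Sum>j<N. smult (c j) (p (d j)))" for N c d
  proof (induction N)
    case 0
    show ?case by (simp add: zero_fun_def p_zero)
  next
    case (Suc N)
    then show ?case by (simp only: sum.lessThan_Suc p_add p_smult)
  qed
  have "x = (\<Sum>j<n. smult (coord j x) (basis j))" for x
  proof -
    have "i x = (\<Sum>j<n. (\<lambda>m. i x j * (if m = j then 1 else 0)))"
      by (rule ext) (auto simp: sum_fun_apply i_support if_distrib cong: if_cong)
    then have "x = p (\<Sum>j<n. (\<lambda>m. i x j * (if m = j then 1 else 0)))"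
      by (simp add: p_i)
    then show ?thesis by (simp add: p_sum coord_def basis_def)
  qed
  moreover have "k_linear smult (*) (coord j)" for j
    by (simp add: k_linear_def coord_def i_add i_smult)
  ultimately have "dual_basis smult n basis coord"
    by (simp add: dual_basis_def dual_basis_axioms_def M)
  then show ?thesis by (rule that)
qed

section \<open>Sweedler calculus in a Hopf algebra\<close>

lemma sum_list_map_concat:
  "sum_list (map f (concat xss)) = sum_list (map (\<lambda>xs. sum_list (map f xs)) xss)"
  by (induction xss) simp_all

lemma sum_list_map_swap:
  fixes F :: "_ \<Rightarrow> _ \<Rightarrow> 'v::comm_monoid_add"
  shows "sum_list (map (\<lambda>x. sum_list (map (F x) ys)) xs)
    = sum_list (map (\<lambda>y. sum_list (map (\<lambda>x. F x y) xs)) ys)"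
  by (induction xs) (simp_all add: sum_list_addf)

lemma sum_list_map_sum_swap:
  fixes F :: "_ \<Rightarrow> _ \<Rightarrow> 'v::comm_monoid_add"
  shows "sum_list (map (\<lambda>x. \<Sum>j\<in>A. F x j) xs) = (\<Sum>j\<in>A. sum_list (map (\<lambda>x. F x j) xs))"
  by (induction xs) (simp_all add: sum.distrib)

locale hopf = module smult
  for smult :: "'k::comm_ring_1 \<Rightarrow> 'h::ab_group_add \<Rightarrow> 'h" +
  fixes mult :: "'h \<Rightarrow> 'h \<Rightarrow> 'h" and one :: 'h
    and Delta :: "'h \<Rightarrow> 'h list list" and eps :: "'h \<Rightarrow> 'k" and S :: "'h \<Rightarrow> 'h"
  assumes hopf_algebra: "hopf_algebra smult mult one Delta eps S"
begin

lemma module_smult: "module smult"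
  by (rule module_axioms)

lemma k_algebra: "k_algebra smult mult one"
  using hopf_algebra by (simp add: hopf_algebra_def)

lemma m_assoc: "mult (mult x y) z = mult x (mult y z)"
  and m_one_left [simp]: "mult one x = x"
  and m_one_right [simp]: "mult x one = x"
  and m_add_left [simp]: "mult (x + y) z = mult x z + mult y z"
  and m_add_right [simp]: "mult x (y + z) = mult x y + mult x z"
  and m_smult_left [simp]: "mult (smult c x) y = smult c (mult x y)"
  and m_smult_right [simp]: "mult x (smult c y) = smult c (mult x y)"
  using k_algebra by (simp_all add: k_algebra_def)

lemma Delta_add: "tens_eq smult 2 (Delta (x + y)) (Delta x @ Delta y)"
  and Delta_smult: "tens_eq smult 2 (Delta (smult c x)) (map (\<lambda>t. [smult c (t!0), t!1]) (Delta x))"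
  and Delta_coassoc: "tens_eq smult 3
        (concat (map (\<lambda>t. map (\<lambda>u. [u!0, u!1, t!1]) (Delta (t!0))) (Delta h)))
        (concat (map (\<lambda>t. map (\<lambda>u. [t!0, u!0, u!1]) (Delta (t!1))) (Delta h)))"
  and Delta_mult: "tens_eq smult 2 (Delta (mult x y))
        (concat (map (\<lambda>t. map (\<lambda>u. [mult (t!0) (u!0), mult (t!1) (u!1)]) (Delta y)) (Delta x)))"
  and Delta_one: "tens_eq smult 2 (Delta one) [[one, one]]"
  and counit_left: "sum_list (map (\<lambda>t. smult (eps (t!0)) (t!1)) (Delta h)) = h"
  and counit_right: "sum_list (map (\<lambda>t. smult (eps (t!1)) (t!0)) (Delta h)) = h"
  and antipode_left: "sum_list (map (\<lambda>t. mult (S (t!0)) (t!1)) (Delta h)) = smult (eps h) one"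
  and antipode_right: "sum_list (map (\<lambda>t. mult (t!0) (S (t!1))) (Delta h)) = smult (eps h) one"
  and eps_mult [simp]: "eps (mult x y) = eps x * eps y"
  and eps_one [simp]: "eps one = 1"
  using hopf_algebra by (simp_all add: hopf_algebra_def)

lemma eps_k_linear: "k_linear smult (*) eps"
  using hopf_algebra by (simp add: hopf_algebra_def lin_fun_def k_linear_def)

lemma S_k_linear: "k_linear smult smult S"
  using hopf_algebra by (simp add: hopf_algebra_def lin_map_def k_linear_def)

lemma eps_add [simp]: "eps (x + y) = eps x + eps y"
  and eps_smult [simp]: "eps (smult c x) = c * eps x"
  using eps_k_linear by (simp_all add: k_linear_def)

lemma S_add [simp]: "S (x + y) = S x + S y"
  and S_smult [simp]: "S (smult c x) = smult c (S x)"
  using S_k_linear by (simp_all add: k_linear_def)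

lemma mult_left_k_linear: "k_linear smult smult (mult a)"
  and mult_right_k_linear: "k_linear smult smult (\<lambda>x. mult x a)"
  by (simp_all add: k_linear_def)

definition sweedler :: "'h \<Rightarrow> ('h \<Rightarrow> 'h \<Rightarrow> 'v::ab_group_add) \<Rightarrow> 'v" where
  "sweedler x B = sum_list (map (\<lambda>t. B (t!0) (t!1)) (Delta x))"

lemma sweedler_cong: "(\<And>a b. F a b = G a b) \<Longrightarrow> sweedler x F = sweedler x G"
  by (simp add: sweedler_def)

lemma sweedler_swap:
  "sweedler x (\<lambda>a b. sweedler y (\<lambda>c d. F a b c d))
    = sweedler y (\<lambda>c d. sweedler x (\<lambda>a b. F a b c d))"
  unfolding sweedler_def by (rule sum_list_map_swap)

lemma sweedler_add_fun: "sweedler x (\<lambda>a b. F a b + G a b) = sweedler x F + sweedler x G"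
  by (simp add: sweedler_def sum_list_addf)

lemma sweedler_sum_fun: "sweedler x (\<lambda>a b. \<Sum>j\<in>A. F a b j) = (\<Sum>j\<in>A. sweedler x (\<lambda>a b. F a b j))"
  unfolding sweedler_def by (rule sum_list_map_sum_swap)

lemma sweedler_additive:
  assumes "\<And>u v. psi (u + v) = psi u + psi v"
  shows "psi (sweedler x B) = sweedler x (\<lambda>a b. psi (B a b))"
proof -
  have "psi 0 = 0" using assms[of 0 0] by simp
  then have "psi (sum_list (map f xs)) = sum_list (map (\<lambda>t. psi (f t)) xs)"
    for f and xs :: "'h list list"
    by (induction xs) (simp_all add: assms)
  then show ?thesis unfolding sweedler_def .
qed

lemma sweedler_scale_fun:
  "module scl \<Longrightarrow> sweedler x (\<lambda>a b. scl c (B a b)) = scl c (sweedler x B)"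
  by (rule sweedler_additive[symmetric]) (rule module.scale_right_distrib)

lemma sweedler_add:
  assumes "module scl" "k_bilinear smult scl B"
  shows "sweedler (x + y) B = sweedler x B + sweedler y B"
  using module.tens_eq_bilinear[OF assms Delta_add] by (simp add: sweedler_def)

lemma sweedler_smult:
  assumes M: "module scl" and B: "k_bilinear smult scl B"
  shows "sweedler (smult c x) B = scl c (sweedler x B)"
proof -
  have "sweedler (smult c x) B = sweedler x (\<lambda>a b. B (smult c a) b)"
    using module.tens_eq_bilinear[OF M B Delta_smult] by (simp add: sweedler_def o_def)
  also have "\<dots> = scl c (sweedler x B)"
    using B by (simp add: k_bilinear_def k_linear_def sweedler_scale_fun[OF M])
  finally show ?thesis .
qed

lemma sweedler_coassoc:
  assumes "module scl" "k_trilinear smult scl K"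
  shows "sweedler h (\<lambda>a b. sweedler a (\<lambda>c d. K c d b))
    = sweedler h (\<lambda>a b. sweedler b (\<lambda>c d. K a c d))"
  using module.tens_eq_trilinear[OF assms Delta_coassoc[of h]]
  by (simp add: sweedler_def sum_list_map_concat o_def)

lemma sweedler_mult:
  assumes "module scl" "k_bilinear smult scl B"
  shows "sweedler (mult x y) B = sweedler x (\<lambda>a b. sweedler y (\<lambda>c d. B (mult a c) (mult b d)))"
  using module.tens_eq_bilinear[OF assms Delta_mult[of x y]]
  by (simp add: sweedler_def sum_list_map_concat o_def)

lemma sweedler_one:
  assumes "module scl" "k_bilinear smult scl B"
  shows "sweedler one B = B one one"
  using module.tens_eq_bilinear[OF assms Delta_one] by (simp add: sweedler_def)

lemma sweedler_counit_left:
  assumes M: "module scl" and L: "k_linear smult scl psi"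
  shows "sweedler h (\<lambda>a b. scl (eps a) (psi b)) = psi h"
proof -
  have "psi h = psi (sum_list (map (\<lambda>t. smult (eps (t!0)) (t!1)) (Delta h)))"
    by (simp only: counit_left)
  also have "\<dots> = sweedler h (\<lambda>a b. scl (eps a) (psi b))"
    using L by (simp add: module.k_linear_sum_list[OF M L] sweedler_def k_linear_def)
  finally show ?thesis by simp
qed

lemma sweedler_counit_right:
  assumes M: "module scl" and L: "k_linear smult scl psi"
  shows "sweedler h (\<lambda>a b. scl (eps b) (psi a)) = psi h"
proof -
  have "psi h = psi (sum_list (map (\<lambda>t. smult (eps (t!1)) (t!0)) (Delta h)))"
    by (simp only: counit_right)
  also have "\<dots> = sweedler h (\<lambda>a b. scl (eps b) (psi a))"
    using L by (simp add: module.k_linear_sum_list[OF M L] sweedler_def k_linear_def)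
  finally show ?thesis by simp
qed

lemma sweedler_antipode_left:
  assumes M: "module scl" and L: "k_linear smult scl psi"
  shows "sweedler h (\<lambda>a b. psi (mult (S a) b)) = scl (eps h) (psi one)"
proof -
  have "scl (eps h) (psi one) = psi (sum_list (map (\<lambda>t. mult (S (t!0)) (t!1)) (Delta h)))"
    using L by (simp only: antipode_left k_linear_def)
  also have "\<dots> = sweedler h (\<lambda>a b. psi (mult (S a) b))"
    by (simp add: module.k_linear_sum_list[OF M L] sweedler_def)
  finally show ?thesis by simp
qed

lemma sweedler_antipode_right:
  assumes M: "module scl" and L: "k_linear smult scl psi"
  shows "sweedler h (\<lambda>a b. psi (mult a (S b))) = scl (eps h) (psi one)"
proof -
  have "scl (eps h) (psi one) = psi (sum_list (map (\<lambda>t. mult (t!0) (S (t!1))) (Delta h)))"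
    using L by (simp only: antipode_right k_linear_def)
  also have "\<dots> = sweedler h (\<lambda>a b. psi (mult a (S b)))"
    by (simp add: module.k_linear_sum_list[OF M L] sweedler_def)
  finally show ?thesis by simp
qed

lemma mult_sweedler_left: "mult c (sweedler w B) = sweedler w (\<lambda>a b. mult c (B a b))"
  by (rule sweedler_additive) simp

lemma mult_sweedler_right: "mult (sweedler w B) c = sweedler w (\<lambda>a b. mult (B a b) c)"
  by (rule sweedler_additive) simp

lemma sweedler_smult_scalar_left:
  "sweedler x (\<lambda>a b. smult (c * F a b) (G a b))
    = smult c (sweedler x (\<lambda>a b. smult (F a b) (G a b)))"
  by (simp add: sweedler_scale_fun[OF module_smult, symmetric])

lemmas multilinear_simps = k_bilinear_def k_trilinear_def k_linear_def
  sweedler_add[OF module_smult] sweedler_add[OF module_times]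
  sweedler_smult[OF module_smult] sweedler_smult[OF module_times]
  sweedler_scale_fun[OF module_smult] sweedler_scale_fun[OF module_times]
  sweedler_add_fun sweedler_smult_scalar_left algebra_simps

section \<open>The antipode\<close>

lemma eps_S [simp]: "eps (S h) = eps h"
proof -
  have "sweedler h (\<lambda>a b. eps (mult (S a) b)) = eps h * eps one"
    by (rule sweedler_antipode_left[OF module_times]) (simp add: k_linear_def)
  moreover have "sweedler h (\<lambda>a b. eps b * eps (S a)) = eps (S h)"
    by (rule sweedler_counit_right[OF module_times]) (simp add: k_linear_def)
  ultimately show ?thesis by (simp add: mult.commute)
qed

lemma S_one [simp]: "S one = one"
  using sweedler_antipode_left[OF module_smult, of "\<lambda>x. x" one]
    sweedler_one[OF module_smult, of "\<lambda>a b. mult (S a) b"]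
  by (simp add: multilinear_simps)

text \<open>The sum \<open>\<Sum> S(x\<^sub>1 y\<^sub>1) x\<^sub>2 y\<^sub>2 S(y\<^sub>3) S(x\<^sub>3)\<close> collapses in two ways.\<close>

lemma sweedler_S_mult_cancel_left:
  "sweedler x (\<lambda>x1 x2. sweedler y (\<lambda>y1 y2. sweedler x1 (\<lambda>p q. sweedler y1 (\<lambda>r s.
      mult (mult (S (mult p r)) (mult q s)) (mult (S y2) (S x2)))))) = mult (S y) (S x)"
proof -
  have "sweedler x (\<lambda>x1 x2. sweedler y (\<lambda>y1 y2. sweedler x1 (\<lambda>p q. sweedler y1 (\<lambda>r s.
      mult (mult (S (mult p r)) (mult q s)) (mult (S y2) (S x2))))))
    = sweedler x (\<lambda>x1 x2. sweedler y (\<lambda>y1 y2. smult (eps x1 * eps y1) (mult (S y2) (S x2))))"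
  proof (intro sweedler_cong)
    fix x1 x2 y1 y2
    have "sweedler x1 (\<lambda>p q. sweedler y1 (\<lambda>r s.
        mult (mult (S (mult p r)) (mult q s)) (mult (S y2) (S x2))))
      = sweedler (mult x1 y1) (\<lambda>u v. mult (mult (S u) v) (mult (S y2) (S x2)))"
      by (rule sweedler_mult[OF module_smult, symmetric]) (simp add: multilinear_simps)
    also have "\<dots> = smult (eps (mult x1 y1)) (mult one (mult (S y2) (S x2)))"
      by (rule sweedler_antipode_left[OF module_smult]) (simp add: multilinear_simps)
    finally show "sweedler x1 (\<lambda>p q. sweedler y1 (\<lambda>r s.
        mult (mult (S (mult p r)) (mult q s)) (mult (S y2) (S x2))))
      = smult (eps x1 * eps y1) (mult (S y2) (S x2))" by simp
  qed
  also have "\<dots> = sweedler x (\<lambda>x1 x2. smult (eps x1) (mult (S y) (S x2)))"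
  proof (intro sweedler_cong)
    fix x1 x2
    have "sweedler y (\<lambda>y1 y2. smult (eps y1) (mult (S y2) (S x2))) = mult (S y) (S x2)"
      by (rule sweedler_counit_left[OF module_smult]) (simp add: multilinear_simps)
    then show "sweedler y (\<lambda>y1 y2. smult (eps x1 * eps y1) (mult (S y2) (S x2)))
        = smult (eps x1) (mult (S y) (S x2))"
      by (simp add: sweedler_smult_scalar_left)
  qed
  also have "\<dots> = mult (S y) (S x)"
    by (rule sweedler_counit_left[OF module_smult]) (simp add: multilinear_simps)
  finally show ?thesis .
qed

lemma sweedler_S_mult_cancel_right:
  "sweedler x (\<lambda>x1 x2. sweedler y (\<lambda>y1 y2. sweedler x1 (\<lambda>p q. sweedler y1 (\<lambda>r s.
      mult (mult (S (mult p r)) (mult q s)) (mult (S y2) (S x2)))))) = S (mult x y)"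
proof -
  let ?M = "\<lambda>p q d r s g. mult (mult (S (mult p r)) (mult q s)) (mult (S g) (S d))"
  have "sweedler x (\<lambda>x1 x2. sweedler y (\<lambda>y1 y2. sweedler x1 (\<lambda>p q. sweedler y1 (\<lambda>r s.
      ?M p q x2 r s y2))))
    = sweedler x (\<lambda>x1 x2. sweedler x1 (\<lambda>p q. sweedler y (\<lambda>y1 y2. sweedler y1 (\<lambda>r s.
      ?M p q x2 r s y2))))"
    by (intro sweedler_cong) (rule sweedler_swap)
  also have "\<dots> = sweedler x (\<lambda>p b. sweedler b (\<lambda>q d.
      sweedler y (\<lambda>e f. sweedler e (\<lambda>r s. ?M p q d r s f))))"
    by (rule sweedler_coassoc[OF module_smult]) (simp add: multilinear_simps)
  also have "\<dots> = sweedler x (\<lambda>p b. sweedler b (\<lambda>q d.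
      sweedler y (\<lambda>r f. sweedler f (\<lambda>s g. ?M p q d r s g))))"
    by (intro sweedler_cong sweedler_coassoc[OF module_smult]) (simp add: multilinear_simps)
  also have "\<dots> = sweedler x (\<lambda>p b. sweedler b (\<lambda>q d. sweedler y (\<lambda>r f.
      smult (eps f) (mult (mult (S (mult p r)) q) (S d)))))"
  proof (intro sweedler_cong)
    fix p q d r f
    have "sweedler f (\<lambda>s g. mult (mult (S (mult p r)) q) (mult (mult s (S g)) (S d)))
        = smult (eps f) (mult (mult (S (mult p r)) q) (mult one (S d)))"
      by (rule sweedler_antipode_right[OF module_smult]) (simp add: multilinear_simps)
    then show "sweedler f (\<lambda>s g. ?M p q d r s g)
        = smult (eps f) (mult (mult (S (mult p r)) q) (S d))"
      by (simp add: m_assoc)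
  qed
  also have "\<dots> = sweedler x (\<lambda>p b. sweedler b (\<lambda>q d. mult (mult (S (mult p y)) q) (S d)))"
    by (intro sweedler_cong sweedler_counit_right[OF module_smult]) (simp add: multilinear_simps)
  also have "\<dots> = sweedler x (\<lambda>p b. smult (eps b) (S (mult p y)))"
  proof (intro sweedler_cong)
    fix p b
    have "sweedler b (\<lambda>q d. mult (S (mult p y)) (mult q (S d)))
        = smult (eps b) (mult (S (mult p y)) one)"
      by (rule sweedler_antipode_right[OF module_smult]) (simp add: multilinear_simps)
    then show "sweedler b (\<lambda>q d. mult (mult (S (mult p y)) q) (S d)) = smult (eps b) (S (mult p y))"
      by (simp add: m_assoc)
  qed
  also have "\<dots> = S (mult x y)"
    by (rule sweedler_counit_right[OF module_smult]) (simp add: multilinear_simps)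
  finally show ?thesis .
qed

lemma S_antimultiplicative: "S (mult x y) = mult (S y) (S x)"
  using sweedler_S_mult_cancel_left sweedler_S_mult_cancel_right by metis

lemma sweedler_antipode_twisted:
  assumes B: "k_bilinear smult smult B"
  shows "sweedler h (\<lambda>h1 h2. sweedler h1 (\<lambda>h11 h12. sweedler h2 (\<lambda>h21 h22.
      B (mult h11 (S h22)) (mult h12 (S h21))))) = smult (eps h) (B one one)"
proof -
  have "sweedler h (\<lambda>h1 h2. sweedler h1 (\<lambda>h11 h12. sweedler h2 (\<lambda>h21 h22.
      B (mult h11 (S h22)) (mult h12 (S h21)))))
    = sweedler h (\<lambda>h1 h2. sweedler h2 (\<lambda>h21 h22. sweedler h1 (\<lambda>h11 h12.
      B (mult h11 (S h22)) (mult h12 (S h21)))))"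
    by (rule sweedler_cong, rule sweedler_swap)
  also have "\<dots> = sweedler h (\<lambda>a d. sweedler a (\<lambda>b c. sweedler b (\<lambda>b1 b2.
      B (mult b1 (S d)) (mult b2 (S c)))))"
    by (rule sweedler_coassoc[OF module_smult, symmetric]) (use B in \<open>simp add: multilinear_simps\<close>)
  also have "\<dots> = sweedler h (\<lambda>a d. sweedler a (\<lambda>b c. sweedler c (\<lambda>c1 c2.
      B (mult b (S d)) (mult c1 (S c2)))))"
    by (rule sweedler_cong, rule sweedler_coassoc[OF module_smult])
      (use B in \<open>simp add: multilinear_simps\<close>)
  also have "\<dots> = sweedler h (\<lambda>a d. sweedler a (\<lambda>b c. smult (eps c) (B (mult b (S d)) one)))"
    by (intro sweedler_cong sweedler_antipode_right[OF module_smult])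
      (use B in \<open>simp add: multilinear_simps\<close>)
  also have "\<dots> = sweedler h (\<lambda>a d. B (mult a (S d)) one)"
    by (intro sweedler_cong sweedler_counit_right[OF module_smult])
      (use B in \<open>simp add: multilinear_simps\<close>)
  also have "\<dots> = smult (eps h) (B one one)"
    by (rule sweedler_antipode_right[OF module_smult]) (use B in \<open>simp add: multilinear_simps\<close>)
  finally show ?thesis .
qed

lemma sweedler_S_expand:
  assumes B: "k_bilinear smult smult B"
  shows "sweedler (S h) B = sweedler h (\<lambda>h1 h2. sweedler h2 (\<lambda>p q. sweedler q (\<lambda>q1 q2.
      sweedler (mult (S h1) p) (\<lambda>u v. B (mult u (S q2)) (mult v (S q1))))))"
proof -
  have "sweedler (S h) B = sweedler h (\<lambda>h1 h2. smult (eps h2) (sweedler (S h1) B))"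
    by (rule sweedler_counit_right[OF module_smult, symmetric])
      (use B in \<open>simp add: multilinear_simps\<close>)
  also have "\<dots> = sweedler h (\<lambda>h1 h2. sweedler (S h1) (\<lambda>c d. sweedler h2 (\<lambda>p q.
      sweedler p (\<lambda>p1 p2. sweedler q (\<lambda>q1 q2.
        B (mult c (mult p1 (S q2))) (mult d (mult p2 (S q1))))))))"
  proof -
    have "smult (eps h2) (B c d) = sweedler h2 (\<lambda>p q. sweedler p (\<lambda>p1 p2. sweedler q (\<lambda>q1 q2.
        B (mult c (mult p1 (S q2))) (mult d (mult p2 (S q1))))))" for h2 c d
      by (subst sweedler_antipode_twisted) (use B in \<open>simp_all add: multilinear_simps\<close>)
    then show ?thesis
      by (simp only: sweedler_scale_fun[OF module_smult, symmetric])
  qed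
  also have "\<dots> = sweedler h (\<lambda>h1 h2. sweedler h2 (\<lambda>p q. sweedler (S h1) (\<lambda>c d.
      sweedler q (\<lambda>q1 q2. sweedler p (\<lambda>p1 p2.
        B (mult c (mult p1 (S q2))) (mult d (mult p2 (S q1))))))))"
    by (intro sweedler_cong, subst sweedler_swap) (intro sweedler_cong sweedler_swap)
  also have "\<dots> = sweedler h (\<lambda>h1 h2. sweedler h2 (\<lambda>p q. sweedler q (\<lambda>q1 q2. sweedler (S h1) (\<lambda>c d.
      sweedler p (\<lambda>p1 p2. B (mult (mult c p1) (S q2)) (mult (mult d p2) (S q1)))))))"
    by (simp only: m_assoc, intro sweedler_cong, rule sweedler_swap)
  also have "\<dots> = sweedler h (\<lambda>h1 h2. sweedler h2 (\<lambda>p q. sweedler q (\<lambda>q1 q2.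
      sweedler (mult (S h1) p) (\<lambda>u v. B (mult u (S q2)) (mult v (S q1))))))"
    by (intro sweedler_cong sweedler_mult[OF module_smult, symmetric])
      (use B in \<open>simp add: multilinear_simps\<close>)
  finally show ?thesis .
qed

lemma sweedler_antipode_collapse:
  assumes B: "k_bilinear smult smult B"
  shows "sweedler h (\<lambda>h1 h2. sweedler h2 (\<lambda>p q. sweedler q (\<lambda>q1 q2.
      sweedler (mult (S h1) p) (\<lambda>u v. B (mult u (S q2)) (mult v (S q1))))))
    = sweedler h (\<lambda>a b. B (S b) (S a))"
proof -
  have "sweedler h (\<lambda>h1 h2. sweedler h2 (\<lambda>p q. sweedler q (\<lambda>q1 q2.
      sweedler (mult (S h1) p) (\<lambda>u v. B (mult u (S q2)) (mult v (S q1))))))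
    = sweedler h (\<lambda>a b. sweedler a (\<lambda>c d. sweedler b (\<lambda>q1 q2.
      sweedler (mult (S c) d) (\<lambda>u v. B (mult u (S q2)) (mult v (S q1))))))"
    by (rule sweedler_coassoc[OF module_smult, symmetric]) (use B in \<open>simp add: multilinear_simps\<close>)
  also have "\<dots> = sweedler h (\<lambda>a b. sweedler b (\<lambda>q1 q2. sweedler a (\<lambda>c d.
      sweedler (mult (S c) d) (\<lambda>u v. B (mult u (S q2)) (mult v (S q1))))))"
    by (rule sweedler_cong, rule sweedler_swap)
  also have "\<dots> = sweedler h (\<lambda>a b. sweedler b (\<lambda>q1 q2. smult (eps a) (B (S q2) (S q1))))"
  proof (intro sweedler_cong)
    fix a q1 q2
    have "sweedler a (\<lambda>c d. sweedler (mult (S c) d) (\<lambda>u v. B (mult u (S q2)) (mult v (S q1))))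
       = smult (eps a) (sweedler one (\<lambda>u v. B (mult u (S q2)) (mult v (S q1))))"
      by (rule sweedler_antipode_left[OF module_smult]) (use B in \<open>simp add: multilinear_simps\<close>)
    then show "sweedler a (\<lambda>c d. sweedler (mult (S c) d) (\<lambda>u v. B (mult u (S q2)) (mult v (S q1))))
       = smult (eps a) (B (S q2) (S q1))"
      by (subst (asm) sweedler_one[OF module_smult]) (use B in \<open>simp_all add: multilinear_simps\<close>)
  qed
  also have "\<dots> = sweedler h (\<lambda>a b. smult (eps a) (sweedler b (\<lambda>q1 q2. B (S q2) (S q1))))"
    by (simp only: sweedler_scale_fun[OF module_smult])
  also have "\<dots> = sweedler h (\<lambda>a b. B (S b) (S a))"
    by (rule sweedler_counit_left[OF module_smult]) (use B in \<open>simp add: multilinear_simps\<close>)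
  finally show ?thesis .
qed

lemma sweedler_S:
  assumes B: "k_bilinear smult smult B"
  shows "sweedler (S h) B = sweedler h (\<lambda>a b. B (S b) (S a))"
  using sweedler_S_expand[OF B] sweedler_antipode_collapse[OF B] by (rule trans)

lemma sweedler_S_S:
  assumes B: "k_bilinear smult smult B"
  shows "sweedler (S (S h)) B = sweedler h (\<lambda>a b. B (S (S a)) (S (S b)))"
proof -
  have "sweedler (S (S h)) B = sweedler (S h) (\<lambda>a b. B (S b) (S a))" by (rule sweedler_S[OF B])
  also have "\<dots> = sweedler h (\<lambda>a b. B (S (S a)) (S (S b)))"
    by (subst sweedler_S) (use B in \<open>simp_all add: multilinear_simps\<close>)
  finally show ?thesis .
qed

lemma sweedler_S2_antipode:
  assumes L: "k_linear smult smult psi"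
  shows "sweedler a (\<lambda>c d. psi (mult (S (S d)) (S c))) = smult (eps a) (psi one)"
proof -
  have "sweedler a (\<lambda>c d. psi (S (mult c (S d)))) = smult (eps a) (psi (S one))"
    by (rule sweedler_antipode_right[OF module_smult]) (use L in \<open>simp add: k_linear_def\<close>)
  then show ?thesis by (simp add: S_antimultiplicative)
qed

lemma sweedler_mult_S_S_right:
  assumes F: "k_bilinear smult smult F"
  shows "sweedler x (\<lambda>a b. F a (mult b (S (S h))))
    = sweedler h (\<lambda>h1 h2. sweedler (mult x (S (S h2))) (\<lambda>a b. F (mult a (S h1)) b))"
proof -
  have "sweedler h (\<lambda>h1 h2. sweedler (mult x (S (S h2))) (\<lambda>a b. F (mult a (S h1)) b))
    = sweedler h (\<lambda>h1 h2. sweedler x (\<lambda>x1 x2. sweedler (S (S h2)) (\<lambda>c d.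
        F (mult (mult x1 c) (S h1)) (mult x2 d))))"
    by (intro sweedler_cong sweedler_mult[OF module_smult]) (use F in \<open>simp add: multilinear_simps\<close>)
  also have "\<dots> = sweedler h (\<lambda>h1 h2. sweedler x (\<lambda>x1 x2. sweedler h2 (\<lambda>c d.
      F (mult (mult x1 (S (S c))) (S h1)) (mult x2 (S (S d))))))"
    by (intro sweedler_cong sweedler_S_S) (use F in \<open>simp add: multilinear_simps\<close>)
  also have "\<dots> = sweedler h (\<lambda>h1 h2. sweedler h2 (\<lambda>c d. sweedler x (\<lambda>x1 x2.
      F (mult (mult x1 (S (S c))) (S h1)) (mult x2 (S (S d))))))"
    by (rule sweedler_cong, rule sweedler_swap)
  also have "\<dots> = sweedler h (\<lambda>a b. sweedler a (\<lambda>c d. sweedler x (\<lambda>x1 x2.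
      F (mult (mult x1 (S (S d))) (S c)) (mult x2 (S (S b))))))"
    by (rule sweedler_coassoc[OF module_smult, symmetric]) (use F in \<open>simp add: multilinear_simps\<close>)
  also have "\<dots> = sweedler h (\<lambda>a b. sweedler x (\<lambda>x1 x2. sweedler a (\<lambda>c d.
      F (mult x1 (mult (S (S d)) (S c))) (mult x2 (S (S b))))))"
    by (simp only: m_assoc, rule sweedler_cong, rule sweedler_swap)
  also have "\<dots> = sweedler h (\<lambda>a b. sweedler x (\<lambda>x1 x2. smult (eps a) (F x1 (mult x2 (S (S b))))))"
  proof (intro sweedler_cong)
    fix a b x1 x2
    have "sweedler a (\<lambda>c d. F (mult x1 (mult (S (S d)) (S c))) (mult x2 (S (S b))))
        = smult (eps a) (F (mult x1 one) (mult x2 (S (S b))))"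
      by (rule sweedler_S2_antipode) (use F in \<open>simp add: multilinear_simps\<close>)
    then show "sweedler a (\<lambda>c d. F (mult x1 (mult (S (S d)) (S c))) (mult x2 (S (S b))))
        = smult (eps a) (F x1 (mult x2 (S (S b))))" by simp
  qed
  also have "\<dots> = sweedler h (\<lambda>a b. smult (eps a) (sweedler x (\<lambda>x1 x2. F x1 (mult x2 (S (S b))))))"
    by (simp only: sweedler_scale_fun[OF module_smult])
  also have "\<dots> = sweedler x (\<lambda>a b. F a (mult b (S (S h))))"
    by (rule sweedler_counit_left[OF module_smult]) (use F in \<open>simp add: multilinear_simps\<close>)
  finally show ?thesis by simp
qed

section \<open>Normalized integrals\<close>

definition normalized_integral :: "'h \<Rightarrow> bool" where
  "normalized_integral t \<longleftrightarrow>
     (\<forall>a. mult a t = smult (eps a) t) \<and> (\<forall>a. mult t a = smult (eps a) t) \<and> eps t = 1"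

lemma normalized_integralI:
  assumes left: "\<And>a. mult a t = smult (eps a) t" and right: "\<And>a. mult t' a = smult (eps a) t'"
    and "eps t = 1" "eps t' = 1"
  shows "normalized_integral t"
proof -
  have "t' = t"
    using left[of t'] right[of t] by (simp add: \<open>eps t = 1\<close> \<open>eps t' = 1\<close>)
  with assms show ?thesis
    by (simp add: normalized_integral_def)
qed

lemma central_tensor_integrals:
  assumes e_central: "\<And>a. tens_eq smult 2
      (map (\<lambda>u. [mult a (u!0), u!1]) e) (map (\<lambda>u. [u!0, mult (u!1) a]) e)"
  shows "mult a (sum_list (map (\<lambda>u. smult (eps (u!1)) (u!0)) e))
      = smult (eps a) (sum_list (map (\<lambda>u. smult (eps (u!1)) (u!0)) e))"
    and "mult (sum_list (map (\<lambda>u. smult (eps (u!0)) (u!1)) e)) a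
      = smult (eps a) (sum_list (map (\<lambda>u. smult (eps (u!0)) (u!1)) e))"
proof -
  have e_swap: "sum_list (map (\<lambda>u. B (mult a (u!0)) (u!1)) e)
      = sum_list (map (\<lambda>u. B (u!0) (mult (u!1) a)) e)"
    if "k_bilinear smult smult B" for B
    using tens_eq_bilinear[OF that e_central[of a]] by (simp add: o_def)
  have "mult a (sum_list (map (\<lambda>u. smult (eps (u!1)) (u!0)) e))
      = sum_list (map (\<lambda>u. smult (eps (u!1)) (mult a (u!0))) e)"
    by (simp add: k_linear_sum_list[OF mult_left_k_linear])
  also have "\<dots> = sum_list (map (\<lambda>u. smult (eps (mult (u!1) a)) (u!0)) e)"
    using e_swap[of "\<lambda>p q. smult (eps q) p"] by (simp add: multilinear_simps)
  finally show "mult a (sum_list (map (\<lambda>u. smult (eps (u!1)) (u!0)) e))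
      = smult (eps a) (sum_list (map (\<lambda>u. smult (eps (u!1)) (u!0)) e))"
    by (simp add: scale_sum_list mult.commute)
  have "mult (sum_list (map (\<lambda>u. smult (eps (u!0)) (u!1)) e)) a
      = sum_list (map (\<lambda>u. smult (eps (u!0)) (mult (u!1) a)) e)"
    by (simp add: k_linear_sum_list[OF mult_right_k_linear])
  also have "\<dots> = sum_list (map (\<lambda>u. smult (eps (mult a (u!0))) (u!1)) e)"
    using e_swap[of "\<lambda>p q. smult (eps p) q"] by (simp add: multilinear_simps)
  finally show "mult (sum_list (map (\<lambda>u. smult (eps (u!0)) (u!1)) e)) a
      = smult (eps a) (sum_list (map (\<lambda>u. smult (eps (u!0)) (u!1)) e))"
    by (simp add: scale_sum_list)
qed

lemma separable_imp_normalized_integral: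
  assumes "separable_algebra smult mult one"
  obtains t where "normalized_integral t"
proof -
  obtain e where e_one: "sum_list (map (\<lambda>u. mult (u!0) (u!1)) e) = one"
    and e_central: "\<And>a. tens_eq smult 2
      (map (\<lambda>u. [mult a (u!0), u!1]) e) (map (\<lambda>u. [u!0, mult (u!1) a]) e)"
    using assms unfolding separable_algebra_def by blast
  have "1 = eps (sum_list (map (\<lambda>u. mult (u!0) (u!1)) e))"
    by (simp only: e_one eps_one)
  also have "\<dots> = sum_list (map (\<lambda>u. eps (u!0) * eps (u!1)) e)"
    by (simp add: module.k_linear_sum_list[OF module_times eps_k_linear])
  finally have "eps (sum_list (map (\<lambda>u. smult (eps (u!1)) (u!0)) e)) = 1"
    and "eps (sum_list (map (\<lambda>u. smult (eps (u!0)) (u!1)) e)) = 1"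
    by (simp_all add: module.k_linear_sum_list[OF module_times eps_k_linear] mult.commute)
  with central_tensor_integrals[OF e_central] show ?thesis
    by (blast intro: that normalized_integralI)
qed

end

section \<open>The trace form\<close>

locale fgp_hopf = hopf smult mult one Delta eps S + dual_basis smult n basis coord
  for smult :: "'k::comm_ring_1 \<Rightarrow> 'h::ab_group_add \<Rightarrow> 'h"
    and mult one Delta eps S n basis coord
begin

definition trace_form :: "'h \<Rightarrow> 'k" where
  "trace_form x = trace (\<lambda>y. mult x (S (S y)))"

lemma trace_form_add [simp]: "trace_form (x + y) = trace_form x + trace_form y"
  and trace_form_smult [simp]: "trace_form (smult c x) = c * trace_form x"
  by (simp_all add: trace_form_def trace_def sum.distrib sum_distrib_left)

lemma trace_form_sweedler: "trace_form (sweedler w B) = sweedler w (\<lambda>a b. trace_form (B a b))"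
  by (rule sweedler_additive) simp

lemma trace_form_normalized_integral:
  assumes "normalized_integral t"
  shows "trace_form t = 1"
proof -
  have "trace_form t = (\<Sum>j<n. coord j t * eps (basis j))"
    using assms by (simp add: trace_form_def trace_def normalized_integral_def mult.commute)
  also have "\<dots> = eps t"
    by (rule k_linear_expansion[OF module_times eps_k_linear, symmetric])
  finally show ?thesis
    using assms by (simp add: normalized_integral_def)
qed

lemma sweedler_dual_basis_swap:
  assumes U: "k_linear smult smult U" and P: "k_bilinear smult smult P"
  shows "(\<Sum>j<n. sweedler (basis j) (\<lambda>p1 p2. sweedler (U p2) (\<lambda>w1 w2. smult (coord j w2) (P w1 p1))))
    = (\<Sum>k<n. sweedler (U (basis k)) (\<lambda>w1 w2. sweedler w2 (\<lambda>p1 p2. smult (coord k p2) (P w1 p1))))"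
proof -
  have expand_U: "sweedler (U p2) G = (\<Sum>k<n. smult (coord k p2) (sweedler (U (basis k)) G))"
    if "k_bilinear smult smult G" for p2 G
    by (rule k_linear_expansion[OF module_smult]) (use U that in \<open>simp add: multilinear_simps\<close>)
  have expand_w: "sweedler w2 (\<lambda>p1 p2. smult (coord k p2) (P w1 p1))
      = (\<Sum>j<n. smult (coord j w2) (sweedler (basis j) (\<lambda>p1 p2. smult (coord k p2) (P w1 p1))))"
    for k w1 w2
    by (rule k_linear_expansion[OF module_smult]) (use P in \<open>simp add: multilinear_simps\<close>)
  have "(\<Sum>j<n. sweedler (basis j) (\<lambda>p1 p2. sweedler (U p2) (\<lambda>w1 w2. smult (coord j w2) (P w1 p1))))
    = (\<Sum>j<n. sweedler (basis j) (\<lambda>p1 p2. \<Sum>k<n.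
        smult (coord k p2) (sweedler (U (basis k)) (\<lambda>w1 w2. smult (coord j w2) (P w1 p1)))))"
    by (intro sum.cong refl sweedler_cong expand_U) (use P in \<open>simp add: multilinear_simps\<close>)
  also have "\<dots> = (\<Sum>j<n. \<Sum>k<n. sweedler (basis j) (\<lambda>p1 p2.
      sweedler (U (basis k)) (\<lambda>w1 w2. smult (coord j w2 * coord k p2) (P w1 p1))))"
    by (simp only: sweedler_sum_fun sweedler_scale_fun[OF module_smult, symmetric] scale_scale
        mult.commute)
  also have "\<dots> = (\<Sum>k<n. \<Sum>j<n. sweedler (U (basis k)) (\<lambda>w1 w2.
      sweedler (basis j) (\<lambda>p1 p2. smult (coord j w2 * coord k p2) (P w1 p1))))"
    by (subst sum.swap) (intro sum.cong refl sweedler_swap)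
  also have "\<dots> = (\<Sum>k<n. sweedler (U (basis k)) (\<lambda>w1 w2. \<Sum>j<n.
      smult (coord j w2) (sweedler (basis j) (\<lambda>p1 p2. smult (coord k p2) (P w1 p1)))))"
    by (simp only: sweedler_sum_fun[symmetric] sweedler_smult_scalar_left)
  also have "\<dots> = (\<Sum>k<n. sweedler (U (basis k)) (\<lambda>w1 w2.
      sweedler w2 (\<lambda>p1 p2. smult (coord k p2) (P w1 p1))))"
    by (simp only: expand_w[symmetric])
  finally show ?thesis .
qed

lemma trace_form_left_integral:
  "sweedler x (\<lambda>a b. smult (trace_form b) a) = smult (trace_form x) one"
proof -
  let ?W = "\<lambda>k. mult x (S (S (basis k)))"
  have "sweedler x (\<lambda>a b. smult (trace_form b) a)
      = (\<Sum>j<n. sweedler x (\<lambda>a b. smult (coord j (mult b (S (S (basis j))))) a))"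
    by (simp add: trace_form_def trace_def scale_sum_left sweedler_sum_fun)
  also have "\<dots> = (\<Sum>j<n. sweedler (basis j) (\<lambda>p1 p2.
      sweedler (mult x (S (S p2))) (\<lambda>w1 w2. smult (coord j w2) (mult w1 (S p1)))))"
    by (intro sum.cong refl sweedler_mult_S_S_right) (simp add: multilinear_simps)
  also have "\<dots> = (\<Sum>k<n. sweedler (?W k) (\<lambda>w1 w2.
      sweedler w2 (\<lambda>p1 p2. smult (coord k p2) (mult w1 (S p1)))))"
    by (rule sweedler_dual_basis_swap[where P = "\<lambda>w p. mult w (S p)"])
      (simp_all add: multilinear_simps)
  also have "\<dots> = (\<Sum>k<n. sweedler (?W k) (\<lambda>a b.
      sweedler a (\<lambda>c d. smult (coord k b) (mult c (S d)))))"
    by (intro sum.cong refl sweedler_coassoc[OF module_smult, symmetric])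
      (simp add: multilinear_simps)
  also have "\<dots> = (\<Sum>k<n. sweedler (?W k) (\<lambda>a b. smult (eps a) (smult (coord k b) one)))"
    by (intro sum.cong refl sweedler_cong sweedler_antipode_right[OF module_smult])
      (simp add: multilinear_simps)
  also have "\<dots> = (\<Sum>k<n. smult (coord k (?W k)) one)"
    by (intro sum.cong refl sweedler_counit_left[OF module_smult]) (simp add: multilinear_simps)
  also have "\<dots> = smult (trace_form x) one"
    by (simp add: trace_form_def trace_def scale_sum_left)
  finally show ?thesis .
qed

lemma sweedler_trace_form_mult:
  "sweedler y (\<lambda>a b. smult (trace_form (mult x b)) a)
    = sweedler x (\<lambda>a b. smult (trace_form (mult b y)) (S a))"
proof -
  have "sweedler x (\<lambda>a b. smult (trace_form (mult b y)) (S a))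
      = sweedler x (\<lambda>a b. mult (S a) (sweedler (mult b y) (\<lambda>c d. smult (trace_form d) c)))"
    by (simp add: trace_form_left_integral)
  also have "\<dots> = sweedler x (\<lambda>a b. sweedler (mult b y) (\<lambda>c d. smult (trace_form d) (mult (S a) c)))"
    by (simp add: mult_sweedler_left)
  also have "\<dots> = sweedler x (\<lambda>a b. sweedler b (\<lambda>c d. sweedler y (\<lambda>e f.
      smult (trace_form (mult d f)) (mult (S a) (mult c e)))))"
    by (intro sweedler_cong sweedler_mult[OF module_smult]) (simp add: multilinear_simps)
  also have "\<dots> = sweedler x (\<lambda>a b. sweedler a (\<lambda>c d. sweedler y (\<lambda>e f.
      smult (trace_form (mult b f)) (mult (S c) (mult d e)))))"
    by (rule sweedler_coassoc[OF module_smult, symmetric]) (simp add: multilinear_simps)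
  also have "\<dots> = sweedler x (\<lambda>a b. sweedler y (\<lambda>e f. sweedler a (\<lambda>c d.
      smult (trace_form (mult b f)) (mult (mult (S c) d) e))))"
    by (simp only: m_assoc, intro sweedler_cong, rule sweedler_swap)
  also have "\<dots> = sweedler x (\<lambda>a b. sweedler y (\<lambda>e f.
      smult (eps a) (smult (trace_form (mult b f)) e)))"
  proof (intro sweedler_cong)
    fix a b e f
    have "sweedler a (\<lambda>c d. smult (trace_form (mult b f)) (mult (mult (S c) d) e))
        = smult (eps a) (smult (trace_form (mult b f)) (mult one e))"
      by (rule sweedler_antipode_left[OF module_smult]) (simp add: multilinear_simps)
    then show "sweedler a (\<lambda>c d. smult (trace_form (mult b f)) (mult (mult (S c) d) e))
        = smult (eps a) (smult (trace_form (mult b f)) e)" by simp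
  qed
  also have "\<dots> = sweedler x (\<lambda>a b.
      smult (eps a) (sweedler y (\<lambda>e f. smult (trace_form (mult b f)) e)))"
    by (simp only: sweedler_scale_fun[OF module_smult])
  also have "\<dots> = sweedler y (\<lambda>e f. smult (trace_form (mult x f)) e)"
    by (rule sweedler_counit_left[OF module_smult]) (simp add: multilinear_simps)
  finally show ?thesis by simp
qed

lemma normalized_integral_expansion:
  assumes t: "normalized_integral t"
  shows "h = sweedler t (\<lambda>a b. smult (trace_form (mult b h)) (S a))"
proof -
  have "h = sweedler h (\<lambda>a b. smult (eps b) (smult (trace_form t) a))"
    using sweedler_counit_right[OF module_smult, of "\<lambda>x. x"]
    by (simp add: trace_form_normalized_integral[OF t] k_linear_def)
  also have "\<dots> = sweedler h (\<lambda>a b. smult (trace_form (mult t b)) a)"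
    using t by (simp add: normalized_integral_def mult.commute)
  also have "\<dots> = sweedler t (\<lambda>a b. smult (trace_form (mult b h)) (S a))"
    by (rule sweedler_trace_form_mult)
  finally show ?thesis .
qed

lemma trace_form_mult_commute: "trace_form (mult a b) = trace_form (mult b (S (S a)))"
proof -
  have "trace_form (mult a b) = trace (\<lambda>y. mult a (mult b (S (S y))))"
    by (simp add: trace_form_def m_assoc)
  also have "\<dots> = trace (\<lambda>y. mult b (S (S (mult a y))))"
    by (rule trace_comp_commute) (simp_all add: k_linear_def)
  also have "\<dots> = trace_form (mult b (S (S a)))"
    by (simp add: trace_form_def S_antimultiplicative m_assoc)
  finally show ?thesis .
qed

lemma trace_form_represents:
  assumes t: "normalized_integral t" and f: "k_linear smult (*) f"
  shows "f x = trace_form (mult x (S (S (sweedler t (\<lambda>a b. smult (f (S a)) b)))))"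
proof -
  have "f (sweedler t B) = sweedler t (\<lambda>a b. f (B a b))" for B
    by (rule sweedler_additive) (use f in \<open>simp add: k_linear_def\<close>)
  then have "f x = sweedler t (\<lambda>a b. trace_form (mult b x) * f (S a))"
    by (subst normalized_integral_expansion[OF t]) (use f in \<open>simp add: k_linear_def\<close>)
  also have "\<dots> = trace_form (mult (sweedler t (\<lambda>a b. smult (f (S a)) b)) x)"
    by (simp add: mult_sweedler_right trace_form_sweedler mult.commute)
  also have "\<dots> = trace_form (mult x (S (S (sweedler t (\<lambda>a b. smult (f (S a)) b)))))"
    by (rule trace_form_mult_commute)
  finally show ?thesis .
qed

lemma trace_form_frobenius_hom:
  assumes t: "normalized_integral t"
  shows "frobenius_hom smult mult trace_form"
proof -
  let ?\<Theta> = "\<lambda>h x. trace_form (mult x h)"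
  have "inj ?\<Theta>"
  proof (rule injI)
    fix h h' assume "?\<Theta> h = ?\<Theta> h'"
    then show "h = h'"
      by (subst (1 2) normalized_integral_expansion[OF t]) (simp add: fun_eq_iff)
  qed
  moreover have "?\<Theta> ` UNIV = {f. lin_fun smult f}"
  proof
    show "?\<Theta> ` UNIV \<subseteq> {f. lin_fun smult f}"
      by (auto simp: lin_fun_def)
  next
    show "{f. lin_fun smult f} \<subseteq> ?\<Theta> ` UNIV"
    proof
      fix f assume "f \<in> {f. lin_fun smult f}"
      then have "k_linear smult (*) f"
        by (simp add: lin_fun_def k_linear_def)
      then have "f = ?\<Theta> (S (S (sweedler t (\<lambda>a b. smult (f (S a)) b))))"
        by (intro ext trace_form_represents[OF t])
      then show "f \<in> ?\<Theta> ` UNIV" by blast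
    qed
  qed
  ultimately show ?thesis
    by (simp add: frobenius_hom_def bij_betw_def lin_fun_def)
qed

lemma trace_form_left_integral_dual: "left_integral_dual smult one Delta trace_form"
proof -
  have "sum_list (map (\<lambda>t. g (t!0) * trace_form (t!1)) (Delta x)) = g one * trace_form x"
    if "lin_fun smult g" for g x
  proof -
    have "g (sweedler x (\<lambda>a b. smult (trace_form b) a))
        = sweedler x (\<lambda>a b. g (smult (trace_form b) a))"
      by (rule sweedler_additive) (use that in \<open>simp add: lin_fun_def\<close>)
    then have "sum_list (map (\<lambda>t. g (t!0) * trace_form (t!1)) (Delta x))
        = g (sweedler x (\<lambda>a b. smult (trace_form b) a))"
      using that by (simp add: lin_fun_def sweedler_def mult.commute)
    then show ?thesis
      using that by (simp add: trace_form_left_integral lin_fun_def mult.commute)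
  qed
  then show ?thesis
    by (simp add: left_integral_dual_def lin_fun_def)
qed

end

theorem corollary6p3:
  fixes smult :: "'k::comm_ring_1 \<Rightarrow> 'h::ab_group_add \<Rightarrow> 'h"
    and mult :: "'h \<Rightarrow> 'h \<Rightarrow> 'h" and one :: 'h
    and Delta :: "'h \<Rightarrow> 'h list list" and eps :: "'h \<Rightarrow> 'k" and S :: "'h \<Rightarrow> 'h"
  assumes "module smult"
    and "hopf_algebra smult mult one Delta eps S"
    and "fg_projective smult"
    and "separable_algebra smult mult one"
  shows "FH_algebra smult mult one Delta"
proof -
  have H: "hopf smult mult one Delta eps S"
    using assms(1,2) by (rule hopf.intro[OF _ hopf_axioms.intro])
  obtain n basis coord where "dual_basis smult n basis coord"
    using fg_projective_dual_basis[OF assms(1,3)] .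
  with H interpret fgp_hopf smult mult one Delta eps S n basis coord
    by (rule fgp_hopf.intro)
  obtain t where "normalized_integral t"
    using separable_imp_normalized_integral[OF assms(4)] .
  then show ?thesis
    unfolding FH_algebra_def frobenius_algebra_def
    using k_algebra assms(3) trace_form_frobenius_hom trace_form_left_integral_dual by blast
qed

end
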